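(* Let $K$ be a virtual knot diagram. If $W_K(t)\neq W_K(t^{-1})$, then the flat virtual knot $F(K)$ is nontrivial, i.e. not equivalent to the flat diagram of an embedded circle with no crossings.
   Context: Virtual knot diagrams, real crossings with writhes $w(c)\in\{\pm1\}$, generalized Reidemeister moves as usual. Gauss diagram $G(K)$: counterclockwise circle with, for each real crossing $c$, a chord directed from the overcrossing preimage to the undercrossing preimage, signed $w(c)$. A chord $d$ crosses $c$ if their endpoints interlace; viewing $c$ as an arrow in the disk, $d$ crosses $c$ from left to right if its tail is left of $c$ and its head right of $c$, else from right to left. With $r_\pm(c)$, $l_\pm(c)$ the numbers of chords of sign $\pm$ crossing $c$ from left to right, resp. right to left, $\mathrm{Ind}(c)=r_+(c)-r_-(c)-l_+(c)+l_-(c)$. Writhe polynomial $W_K(t)=\sum_{n\neq0}a_n(K)t^n$ with $a_n(K)=\sum_{\mathrm{Ind}(c)=n}w(c)$. $F(K)$ is the flat virtual knot obtained by replacing every real crossing of $K$ by a flat crossing; flat virtual knots are considered up to flat generalized Reidemeister moves. *)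

theory Defs
  imports Main
begin

text \<open>Gauss diagrams are encoded as Gauss words: the list of chord endpoints in
counterclockwise order around the circle (starting at an arbitrary base point).
An endpoint is a pair (chord label, is_tail); for a real Gauss diagram the tail is
the overcrossing preimage. Signs (writhes) are given by a function on labels.\<close>

type_synonym gword = "(nat \<times> bool) list"

definition gauss_wf :: "gword \<Rightarrow> bool" where
  "gauss_wf w \<longleftrightarrow> distinct w \<and> (\<forall>c b. (c, b) \<in> set w \<longrightarrow> (c, \<not> b) \<in> set w)"

definition gchords :: "gword \<Rightarrow> nat set" where
  "gchords w = fst ` set w"

definition gpos :: "gword \<Rightarrow> nat \<times> bool \<Rightarrow> nat" where
  "gpos w x = (THE i. i < length w \<and> w ! i = x)"

definition tailpos :: "gword \<Rightarrow> nat \<Rightarrow> nat" where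
  "tailpos w c = gpos w (c, True)"

definition headpos :: "gword \<Rightarrow> nat \<Rightarrow> nat" where
  "headpos w c = gpos w (c, False)"

definition in_arc :: "nat \<Rightarrow> nat \<Rightarrow> nat \<Rightarrow> bool" where
  "in_arc p q i = (if p < q then p < i \<and> i < q else p < i \<or> i < q)"

text \<open>The circle is oriented counterclockwise, so the points on the counterclockwise
arc from the tail to the head of the arrow c lie to the right of c.\<close>
definition on_right :: "gword \<Rightarrow> nat \<Rightarrow> nat \<Rightarrow> bool" where
  "on_right w c i = in_arc (tailpos w c) (headpos w c) i"

definition crosses_LR :: "gword \<Rightarrow> nat \<Rightarrow> nat \<Rightarrow> bool" where
  "crosses_LR w c d \<longleftrightarrow> d \<noteq> c \<and> \<not> on_right w c (tailpos w d) \<and> on_right w c (headpos w d)"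

definition crosses_RL :: "gword \<Rightarrow> nat \<Rightarrow> nat \<Rightarrow> bool" where
  "crosses_RL w c d \<longleftrightarrow> d \<noteq> c \<and> on_right w c (tailpos w d) \<and> \<not> on_right w c (headpos w d)"

text \<open>Ind(c) = r_+ - r_- - l_+ + l_-.\<close>
definition gind :: "gword \<Rightarrow> (nat \<Rightarrow> int) \<Rightarrow> nat \<Rightarrow> int" where
  "gind w s c = (\<Sum>d\<in>{d \<in> gchords w. crosses_LR w c d}. s d)
              - (\<Sum>d\<in>{d \<in> gchords w. crosses_RL w c d}. s d)"

text \<open>Coefficient a_n of t^n in the writhe polynomial (a_0 = 0 as n ranges over n \<noteq> 0).\<close>
definition writhe_coeff :: "gword \<Rightarrow> (nat \<Rightarrow> int) \<Rightarrow> int \<Rightarrow> int" where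
  "writhe_coeff w s n = (if n = 0 then 0 else (\<Sum>c\<in>{c \<in> gchords w. gind w s c = n}. s c))"

text \<open>Flattening: a flat chord points from the preimage on strand s1 to the one on s2,
where s2 crosses s1 from right to left. For a real crossing this is the over-to-under
arrow if the writhe is +1 and the reversed arrow if the writhe is -1.\<close>
definition flatten :: "gword \<Rightarrow> (nat \<Rightarrow> int) \<Rightarrow> gword" where
  "flatten w s = map (\<lambda>(c, b). (c, if s c = 1 then b else \<not> b)) w"

text \<open>Flat Reidemeister III configuration: three segments (in word order 1,2,3), the
triangle with counterclockwise side order (1,2,3) if o, else (1,3,2); e i says whether
strand i traverses its side counterclockwise. x, y, z are the chords at the vertices
12, 13, 23.\<close>
definition r3_seg :: "bool \<Rightarrow> (nat \<Rightarrow> bool) \<Rightarrow> nat \<Rightarrow> nat \<Rightarrow> nat \<Rightarrow> nat \<Rightarrow> gword" where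
  "r3_seg ccw e x y z i =
    (let nx = (\<lambda>j::nat. if ccw then (if j = 1 then 2 else if j = 2 then 3 else 1)
                              else (if j = 1 then 3 else if j = 3 then 2 else 1));
         pv = (\<lambda>j::nat. if ccw then (if j = 1 then 3 else if j = 2 then 1 else 2)
                              else (if j = 1 then 2 else if j = 3 then 1 else 3));
         lab = (\<lambda>j k::nat. if {j, k} = {1, 2} then x else if {j, k} = {1, 3} then y else z);
         P = (lab (pv i) i, e (pv i) \<noteq> e i);
         N = (lab i (nx i), e i = e (nx i))
     in if e i then [P, N] else [N, P])"

inductive flat_step :: "gword \<Rightarrow> gword \<Rightarrow> bool" where
  rotate: "flat_step w (rotate1 w)"
| relabel: "inj_on f (gchords w) \<Longrightarrow> flat_step w (map (\<lambda>(c, b). (f c, b)) w)"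
| R1: "c \<notin> gchords (u @ v) \<Longrightarrow> flat_step (u @ [(c, b), (c, \<not> b)] @ v) (u @ v)"
| R2: "c \<noteq> d \<Longrightarrow> c \<notin> gchords (u @ v @ z) \<Longrightarrow> d \<notin> gchords (u @ v @ z) \<Longrightarrow>
       p \<in> {[(c, \<not> b), (d, b)], [(d, b), (c, \<not> b)]} \<Longrightarrow>
       flat_step (u @ [(c, b), (d, \<not> b)] @ v @ p @ z) (u @ v @ z)"
| R3: "distinct [x, y, z] \<Longrightarrow> {x, y, z} \<inter> gchords (u @ v @ q @ t) = {} \<Longrightarrow>
       s1 = r3_seg ccw e x y z 1 \<Longrightarrow> s2 = r3_seg ccw e x y z 2 \<Longrightarrow> s3 = r3_seg ccw e x y z 3 \<Longrightarrow>
       flat_step (u @ s1 @ v @ s2 @ q @ s3 @ t) (u @ rev s1 @ v @ rev s2 @ q @ rev s3 @ t)"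

definition flat_equiv :: "gword \<Rightarrow> gword \<Rightarrow> bool" where
  "flat_equiv = (symclp flat_step)\<^sup>*\<^sup>*"

end

theory Submission
  imports Defs
begin

text \<open>The flat index of a chord c of a Gauss word is the total weight of the endpoints strictly
between the two endpoints of c (heads count +1, tails -1), signed by the first endpoint of c; it
only depends on the flat diagram. For every odd g, the sum of g over the flat indices of all chords
is invariant under flat Reidemeister moves: R1 creates a chord of index 0, R2 two chords of opposite
indices, and R3, rotation and relabelling preserve the index of every chord. The index Ind(c) of a
real crossing is w(c) times the flat index of c in F(K), so for g(m) = [m = n] - [m = -n] the
invariant of F(K) is a_n(K) - a_{-n}(K), which must vanish if F(K) is trivial.\<close>

definition endpoint_weight :: "nat \<times> bool \<Rightarrow> int" where
  "endpoint_weight e = (if snd e then -1 else 1)"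

definition word_weight :: "gword \<Rightarrow> int" where
  "word_weight l = sum_list (map endpoint_weight l)"

lemma word_weight_simps [simp]:
  "word_weight [] = 0"
  "word_weight (e # l) = endpoint_weight e + word_weight l"
  "word_weight (l @ l') = word_weight l + word_weight l'"
  "word_weight (rev l) = word_weight l"
  by (simp_all add: word_weight_def rev_map[symmetric])

text \<open>The flat index of a chord c is computed by one scan of the word; the state records how
many endpoints of c have been passed, minus the weight of the first one, and the weight of the
arc between the two endpoints.\<close>

fun index_step :: "nat \<Rightarrow> nat \<times> int \<times> int \<Rightarrow> nat \<times> bool \<Rightarrow> nat \<times> int \<times> int" where
  "index_step c (k, \<sigma>, a) e =
     (if fst e = c then (if k = 0 then (1, - endpoint_weight e, 0) else (2, \<sigma>, a))
      else if k = 1 then (1, \<sigma>, a + endpoint_weight e) else (k, \<sigma>, a))"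

definition flat_index :: "gword \<Rightarrow> nat \<Rightarrow> int" where
  "flat_index w c = (case foldl (index_step c) (0, 0, 0) w of (_, \<sigma>, a) \<Rightarrow> \<sigma> * a)"

lemma foldl_index_step_other:
  "c \<notin> fst ` set l \<Longrightarrow>
   foldl (index_step c) (k, \<sigma>, a) l = (k, \<sigma>, if k = 1 then a + word_weight l else a)"
  by (induction l arbitrary: a) auto

lemma flat_index_replace:
  assumes "c \<notin> fst ` set m" "c \<notin> fst ` set m'" "word_weight m = word_weight m'"
  shows "flat_index (u @ m @ v) c = flat_index (u @ m' @ v) c"
proof -
  obtain k \<sigma> a where "foldl (index_step c) (0, 0, 0) u = (k, \<sigma>, a)"
    using prod_cases3 by blast
  then show ?thesis
    using assms by (simp add: flat_index_def foldl_index_step_other)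
qed

lemma flat_index_split:
  assumes "c \<notin> fst ` set a" "c \<notin> fst ` set b"
  shows "flat_index (a @ [(c, \<beta>)] @ b @ [(c, \<beta>')] @ d) c = - endpoint_weight (c, \<beta>) * word_weight b"
proof -
  have "foldl (index_step c) (2, \<sigma>, x) l = (2, \<sigma>, x)" for l \<sigma> x
    by (induction l) auto
  then show ?thesis
    using assms by (simp add: flat_index_def foldl_index_step_other)
qed

lemma gauss_wf_chord_split:
  assumes "gauss_wf w" "c \<in> gchords w"
  obtains a \<beta> b d where "w = a @ [(c, \<beta>)] @ b @ [(c, \<not> \<beta>)] @ d"
    "c \<notin> fst ` set a" "c \<notin> fst ` set b" "c \<notin> fst ` set d"
proof -
  have dist: "distinct w" and sym: "\<And>\<beta>. (c, \<beta>) \<in> set w \<Longrightarrow> (c, \<not> \<beta>) \<in> set w"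
    using assms(1) by (auto simp: gauss_wf_def)
  from assms(2) have "\<exists>x\<in>set w. fst x = c" by (auto simp: gchords_def)
  from split_list_first_prop[OF this] obtain a e r where
    w: "w = a @ e # r" and e: "fst e = c" and a: "\<forall>y\<in>set a. fst y \<noteq> c" by blast
  define \<beta> where "\<beta> = snd e"
  have e_eq: "e = (c, \<beta>)" using e by (simp add: \<beta>_def prod_eq_iff)
  have "(c, \<not> \<beta>) \<in> set r" using sym[of \<beta>] w e_eq a by auto
  then have "\<exists>x\<in>set r. fst x = c" by force
  from split_list_first_prop[OF this] obtain b e' d where
    r: "r = b @ e' # d" and e': "fst e' = c" and b: "\<forall>y\<in>set b. fst y \<noteq> c" by blast
  have "e' \<noteq> e" using dist w r by auto
  then have e'_eq: "e' = (c, \<not> \<beta>)" using e' e_eq by (cases e') auto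
  have "c \<notin> fst ` set d"
  proof
    assume "c \<in> fst ` set d"
    then obtain \<gamma> where "(c, \<gamma>) \<in> set d" by auto
    moreover have "\<gamma> = \<beta> \<or> \<gamma> = (\<not> \<beta>)" by auto
    ultimately show False using dist w r e_eq e'_eq by auto
  qed
  with that show thesis using w r e_eq e'_eq a b by fastforce
qed

lemma gauss_wf_sum_list_antisym:
  assumes "gauss_wf w" "\<And>c \<beta>. f (c, \<not> \<beta>) = - f (c, \<beta>)"
  shows "sum_list (map f w) = (0::int)"
proof -
  let ?h = "\<lambda>(c::nat, \<beta>::bool). (c, \<not> \<beta>)"
  have dist: "distinct w" using assms(1) by (simp add: gauss_wf_def)
  have "?h ` set w = set w" using assms(1) unfolding gauss_wf_def by (force simp: image_iff)
  moreover have "inj_on ?h (set w)" by (auto simp: inj_on_def)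
  ultimately have "(\<Sum>x\<in>set w. f x) = (\<Sum>x\<in>set w. f (?h x))"
    by (metis sum.reindex_cong)
  also have "\<dots> = - (\<Sum>x\<in>set w. f x)"
    by (simp add: assms(2) split_def sum_negf)
  finally show ?thesis using dist by (simp add: sum_list_distinct_conv_sum_set)
qed

lemma flat_index_rotate1:
  assumes "gauss_wf (x # xs)" "c \<in> gchords (x # xs)"
  shows "flat_index (xs @ [x]) c = flat_index (x # xs) c"
proof -
  obtain a \<beta> b d where w: "x # xs = a @ [(c, \<beta>)] @ b @ [(c, \<not> \<beta>)] @ d"
    and nc: "c \<notin> fst ` set a" "c \<notin> fst ` set b" "c \<notin> fst ` set d"
    using gauss_wf_chord_split[OF assms] .
  have idx: "flat_index (x # xs) c = - endpoint_weight (c, \<beta>) * word_weight b"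
    unfolding w using nc(1,2) by (rule flat_index_split)
  show ?thesis
  proof (cases a)
    case Nil
    \<comment> \<open>the arc of c becomes the complementary one, of opposite weight as the word weighs 0\<close>
    have "word_weight (x # xs) = 0"
      unfolding word_weight_def
      by (rule gauss_wf_sum_list_antisym[OF assms(1)]) (simp add: endpoint_weight_def)
    then have "word_weight d = - word_weight b"
      using w Nil by (cases \<beta>) (simp_all add: endpoint_weight_def)
    moreover have "xs @ [x] = b @ [(c, \<not> \<beta>)] @ d @ [(c, \<beta>)]" using w Nil by simp
    ultimately show ?thesis
      using idx nc flat_index_split[of c b d "\<not> \<beta>" \<beta> "[]"] by (simp add: endpoint_weight_def)
  next
    case (Cons y a')
    then have "xs @ [x] = a' @ [(c, \<beta>)] @ b @ [(c, \<not> \<beta>)] @ (d @ [x])" using w by simp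
    then show ?thesis using idx nc Cons flat_index_split[of c a' b] by simp
  qed
qed

lemma word_weight_relabel: "word_weight (map (\<lambda>(c, \<beta>). (f c, \<beta>)) l) = word_weight l"
  by (induction l) (auto simp: endpoint_weight_def)

lemma flat_index_relabel:
  assumes "gauss_wf w" "c \<in> gchords w" "inj_on f (gchords w)"
  shows "flat_index (map (\<lambda>(c, \<beta>). (f c, \<beta>)) w) (f c) = flat_index w c"
proof -
  let ?h = "\<lambda>(c, \<beta>). (f c, \<beta>)"
  obtain a \<beta> b d where w: "w = a @ [(c, \<beta>)] @ b @ [(c, \<not> \<beta>)] @ d"
    and nc: "c \<notin> fst ` set a" "c \<notin> fst ` set b" "c \<notin> fst ` set d"
    using gauss_wf_chord_split[OF assms(1,2)] .
  have nc': "f c \<notin> fst ` set (map ?h l)" if "set l \<subseteq> set w" "c \<notin> fst ` set l" for l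
  proof
    assume "f c \<in> fst ` set (map ?h l)"
    then obtain c' \<gamma> where c': "(c', \<gamma>) \<in> set l" "f c' = f c" by auto
    then have "c' \<in> gchords w" using that by (force simp: gchords_def)
    then have "c' = c" using c' assms(2,3) by (auto dest: inj_onD)
    then show False using c' that by force
  qed
  have "set a \<subseteq> set w" "set b \<subseteq> set w" using w by auto
  then have "f c \<notin> fst ` set (map ?h a)" "f c \<notin> fst ` set (map ?h b)"
    using nc' nc by blast+
  moreover have "map ?h w = map ?h a @ [(f c, \<beta>)] @ map ?h b @ [(f c, \<not> \<beta>)] @ map ?h d"
    using w by simp
  ultimately have "flat_index (map ?h w) (f c) = - endpoint_weight (f c, \<beta>) * word_weight (map ?h b)"
    by (metis flat_index_split)
  also have "\<dots> = - endpoint_weight (c, \<beta>) * word_weight b"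
    by (simp add: word_weight_relabel endpoint_weight_def)
  also have "\<dots> = flat_index w c"
    unfolding w using nc(1,2) by (rule flat_index_split[symmetric])
  finally show ?thesis .
qed

lemma flat_index_R3:
  assumes "distinct [x, y, z]" "c \<in> {x, y, z}"
    "c \<notin> fst ` set u" "c \<notin> fst ` set v" "c \<notin> fst ` set q" "c \<notin> fst ` set t"
  shows "flat_index (u @ r3_seg ccw e x y z 1 @ v @ r3_seg ccw e x y z 2 @ q @ r3_seg ccw e x y z 3 @ t) c =
         flat_index (u @ rev (r3_seg ccw e x y z 1) @ v @ rev (r3_seg ccw e x y z 2) @ q @
                     rev (r3_seg ccw e x y z 3) @ t) c"
  using assms
  by (cases ccw; cases "e 1"; cases "e 2"; cases "e 3")
     (auto simp: r3_seg_def Let_def insert_commute doubleton_eq_iff flat_index_def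
        foldl_index_step_other endpoint_weight_def)

definition index_sum :: "(int \<Rightarrow> int) \<Rightarrow> gword \<Rightarrow> int" where
  "index_sum g w = (\<Sum>c\<in>gchords w. g (flat_index w c))"

lemma finite_gchords [simp]: "finite (gchords w)"
  by (simp add: gchords_def)

lemma index_sum_rotate1:
  assumes "gauss_wf w"
  shows "index_sum g (rotate1 w) = index_sum g w"
proof (cases w)
  case (Cons x xs)
  have "gchords (xs @ [x]) = gchords (x # xs)" by (auto simp: gchords_def)
  then show ?thesis
    unfolding index_sum_def Cons rotate1.simps
    using flat_index_rotate1 assms Cons by (auto intro: sum.cong)
qed simp

lemma index_sum_relabel:
  assumes "gauss_wf w" "inj_on f (gchords w)"
  shows "index_sum g (map (\<lambda>(c, \<beta>). (f c, \<beta>)) w) = index_sum g w"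
proof -
  have "gchords (map (\<lambda>(c, \<beta>). (f c, \<beta>)) w) = f ` gchords w"
    by (force simp: gchords_def image_iff)
  then show ?thesis
    unfolding index_sum_def using assms flat_index_relabel[OF assms(1) _ assms(2)]
    by (simp add: sum.reindex)
qed

lemma index_sum_R1:
  assumes "c \<notin> gchords (u @ v)" "\<And>m. g (- m) = - g m"
  shows "index_sum g (u @ [(c, \<beta>), (c, \<not> \<beta>)] @ v) = index_sum g (u @ v)"
proof -
  let ?w = "u @ [(c, \<beta>), (c, \<not> \<beta>)] @ v"
  have "g 0 = 0" using assms(2)[of 0] by simp
  moreover have "flat_index ?w c = 0"
    using assms(1) flat_index_split[of c u "[]" \<beta> "\<not> \<beta>" v] by (auto simp: gchords_def)
  moreover have "flat_index ?w d = flat_index (u @ [] @ v) d" if "d \<in> gchords (u @ v)" for d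
    by (rule flat_index_replace) (use that assms(1) in \<open>auto simp: endpoint_weight_def\<close>)
  moreover have "gchords ?w = insert c (gchords (u @ v))" by (auto simp: gchords_def)
  ultimately show ?thesis
    unfolding index_sum_def using assms(1) by simp
qed

lemma index_sum_R2:
  assumes "c \<noteq> d" "c \<notin> gchords (u @ v @ z)" "d \<notin> gchords (u @ v @ z)"
    "p \<in> {[(c, \<not> \<beta>), (d, \<beta>)], [(d, \<beta>), (c, \<not> \<beta>)]}" "\<And>m. g (- m) = - g m"
  shows "index_sum g (u @ [(c, \<beta>), (d, \<not> \<beta>)] @ v @ p @ z) = index_sum g (u @ v @ z)"
proof -
  let ?w = "u @ [(c, \<beta>), (d, \<not> \<beta>)] @ v @ p @ z"
  have nc: "c \<notin> fst ` set u" "c \<notin> fst ` set v" "c \<notin> fst ` set z"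
    "d \<notin> fst ` set u" "d \<notin> fst ` set v" "d \<notin> fst ` set z"
    using assms(2,3) by (auto simp: gchords_def)
  have "flat_index ?w c = - flat_index ?w d"
    using assms(1,4) nc by (auto simp: flat_index_def foldl_index_step_other endpoint_weight_def)
  then have cancel: "g (flat_index ?w c) + g (flat_index ?w d) = 0" using assms(5) by simp
  have "flat_index ?w e = flat_index (u @ v @ z) e" if "e \<in> gchords (u @ v @ z)" for e
  proof -
    have "e \<noteq> c" "e \<noteq> d" using that assms(2,3) by auto
    then have "flat_index ?w e = flat_index (u @ [] @ v @ p @ z) e"
      by (intro flat_index_replace) (auto simp: endpoint_weight_def)
    also have "\<dots> = flat_index ((u @ v) @ [] @ z) e"
      using flat_index_replace[of e p "[]" "u @ v" z] \<open>e \<noteq> c\<close> \<open>e \<noteq> d\<close> assms(4)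
      by (auto simp: endpoint_weight_def)
    finally show ?thesis by simp
  qed
  moreover have "gchords ?w = insert c (insert d (gchords (u @ v @ z)))"
    using assms(4) by (auto simp: gchords_def)
  ultimately show ?thesis
    unfolding index_sum_def using assms(1,2,3) cancel by (simp add: add.assoc[symmetric])
qed

lemma flat_index_rev_segment:
  "c \<notin> fst ` set s \<Longrightarrow> flat_index (u @ s @ v) c = flat_index (u @ rev s @ v) c"
  by (rule flat_index_replace) auto

lemma index_sum_R3:
  assumes "distinct [x, y, z]" "{x, y, z} \<inter> gchords (u @ v @ q @ t) = {}"
  shows "index_sum g (u @ r3_seg ccw e x y z 1 @ v @ r3_seg ccw e x y z 2 @ q @ r3_seg ccw e x y z 3 @ t) =
         index_sum g (u @ rev (r3_seg ccw e x y z 1) @ v @ rev (r3_seg ccw e x y z 2) @ q @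
                      rev (r3_seg ccw e x y z 3) @ t)"
proof -
  define s1 s2 s3 where "s1 = r3_seg ccw e x y z 1" "s2 = r3_seg ccw e x y z 2"
    "s3 = r3_seg ccw e x y z 3"
  have segs: "fst ` set s1 \<subseteq> {x, y, z}" "fst ` set s2 \<subseteq> {x, y, z}" "fst ` set s3 \<subseteq> {x, y, z}"
    unfolding s1_s2_s3_def by (auto simp: r3_seg_def Let_def)
  have "flat_index (u @ s1 @ v @ s2 @ q @ s3 @ t) c = flat_index (u @ rev s1 @ v @ rev s2 @ q @ rev s3 @ t) c"
    for c
  proof (cases "c \<in> {x, y, z}")
    case True
    then show ?thesis
      unfolding s1_s2_s3_def using assms by (intro flat_index_R3) (auto simp: gchords_def)
  next
    case False
    then have "c \<notin> fst ` set s1" "c \<notin> fst ` set s2" "c \<notin> fst ` set s3" using segs by blast+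
    then show ?thesis
      using flat_index_rev_segment[of c s1 u "v @ s2 @ q @ s3 @ t"]
        flat_index_rev_segment[of c s2 "u @ rev s1 @ v" "q @ s3 @ t"]
        flat_index_rev_segment[of c s3 "u @ rev s1 @ v @ rev s2 @ q" t]
      by simp
  qed
  moreover have "gchords (u @ s1 @ v @ s2 @ q @ s3 @ t) = gchords (u @ rev s1 @ v @ rev s2 @ q @ rev s3 @ t)"
    by (simp add: gchords_def)
  ultimately show ?thesis
    unfolding index_sum_def s1_s2_s3_def[symmetric] by simp
qed

lemma gauss_wf_extend:
  assumes "set w' = set w \<union> X" "\<And>c \<beta>. (c, \<beta>) \<in> X \<Longrightarrow> (c, \<not> \<beta>) \<in> X"
    "\<And>c \<beta> \<gamma>. (c, \<beta>) \<in> X \<Longrightarrow> (c, \<gamma>) \<notin> set w" "distinct w' = distinct w"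
  shows "gauss_wf w' = gauss_wf w"
  unfolding gauss_wf_def using assms by blast

lemma gauss_wf_R1:
  assumes "c \<notin> gchords (u @ v)"
  shows "gauss_wf (u @ [(c, \<beta>), (c, \<not> \<beta>)] @ v) = gauss_wf (u @ v)"
proof -
  have "(c, \<gamma>) \<notin> set u" "(c, \<gamma>) \<notin> set v" for \<gamma>
    using assms by (force simp: gchords_def)+
  then show ?thesis
    by (intro gauss_wf_extend[where X = "{(c, \<beta>), (c, \<not> \<beta>)}"]) auto
qed

lemma gauss_wf_R2:
  assumes "c \<noteq> d" "c \<notin> gchords (u @ v @ z)" "d \<notin> gchords (u @ v @ z)"
    "p \<in> {[(c, \<not> \<beta>), (d, \<beta>)], [(d, \<beta>), (c, \<not> \<beta>)]}"
  shows "gauss_wf (u @ [(c, \<beta>), (d, \<not> \<beta>)] @ v @ p @ z) = gauss_wf (u @ v @ z)"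
proof -
  have "(c, \<gamma>) \<notin> set u" "(c, \<gamma>) \<notin> set v" "(c, \<gamma>) \<notin> set z"
    "(d, \<gamma>) \<notin> set u" "(d, \<gamma>) \<notin> set v" "(d, \<gamma>) \<notin> set z" for \<gamma>
    using assms(2,3) by (force simp: gchords_def)+
  then show ?thesis
    by (intro gauss_wf_extend[where X = "{(c, \<beta>), (d, \<not> \<beta>), (c, \<not> \<beta>), (d, \<beta>)}"])
       (use assms(1,4) in auto)
qed

lemma gauss_wf_relabel:
  assumes "inj_on f (gchords w)"
  shows "gauss_wf (map (\<lambda>(c, \<beta>). (f c, \<beta>)) w) = gauss_wf w"
proof -
  let ?h = "\<lambda>(c, \<beta>). (f c, \<beta>)"
  have inj: "inj_on ?h (set w)"
    using assms unfolding inj_on_def gchords_def by force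
  have "(c, \<not> \<beta>) \<in> set w"
    if wf: "gauss_wf (map ?h w)" and c: "(c, \<beta>) \<in> set w" for c \<beta>
  proof -
    have "(f c, \<not> \<beta>) \<in> set (map ?h w)"
      using wf c unfolding gauss_wf_def by force
    then obtain c' where c': "(c', \<not> \<beta>) \<in> set w" "f c' = f c" by auto
    moreover have "c' \<in> gchords w" "c \<in> gchords w"
      using c' c by (force simp: gchords_def)+
    ultimately have "c' = c"
      using inj_onD[OF assms] by blast
    with c' show ?thesis by simp
  qed
  then show ?thesis
    using inj by (auto simp: gauss_wf_def distinct_map)
qed

lemma gauss_wf_flat_step: "flat_step w w' \<Longrightarrow> gauss_wf w' = gauss_wf w"
proof (induction rule: flat_step.induct)
  case (rotate w)
  then show ?case by (simp add: gauss_wf_def)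
next
  case (relabel f w)
  then show ?case by (rule gauss_wf_relabel)
next
  case (R1 c u v b)
  then show ?case by (rule gauss_wf_R1[symmetric])
next
  case (R2 c d u v z p b)
  then show ?case by (rule gauss_wf_R2[symmetric])
next
  case R3
  then show ?case by (simp add: gauss_wf_def ac_simps)
qed

lemma index_sum_flat_step:
  assumes "flat_step w w'" "gauss_wf w" "\<And>m. g (- m) = - g m"
  shows "index_sum g w' = index_sum g w"
  using assms
proof (induction rule: flat_step.induct)
  case (rotate w)
  then show ?case by (simp add: index_sum_rotate1)
next
  case (relabel f w)
  then show ?case by (simp add: index_sum_relabel)
next
  case (R1 c u v b)
  then show ?case using index_sum_R1[of c u v g b] by simp
next
  case (R2 c d u v z p b)
  then show ?case using index_sum_R2[of c d u v z p b g] by simp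
next
  case (R3 x y z u v q t s1 ccw e s2 s3)
  then show ?case using index_sum_R3[of x y z u v q t g ccw e] by simp
qed

lemma flat_equiv_gauss_wf:
  assumes "flat_equiv w w'"
  shows "gauss_wf w' = gauss_wf w"
  using assms unfolding flat_equiv_def
proof (induction rule: rtranclp_induct)
  case (step w' w'')
  from step.hyps(2) have "gauss_wf w'' = gauss_wf w'"
    by (cases rule: symclpE) (simp_all add: gauss_wf_flat_step)
  with step.IH show ?case by simp
qed simp

lemma flat_equiv_index_sum:
  assumes "flat_equiv w w'" "gauss_wf w" "\<And>m. g (- m) = - g m"
  shows "index_sum g w' = index_sum g w"
  using assms(1) unfolding flat_equiv_def
proof (induction rule: rtranclp_induct)
  case (step w' w'')
  then have "gauss_wf w'"
    using flat_equiv_gauss_wf assms(2) unfolding flat_equiv_def by blast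
  from step.hyps(2) have "index_sum g w'' = index_sum g w'"
  proof (cases rule: symclpE)
    assume "flat_step w' w''"
    from index_sum_flat_step[where g = g, OF this \<open>gauss_wf w'\<close> assms(3)] show ?thesis .
  next
    assume s: "flat_step w'' w'"
    then have "gauss_wf w''" using gauss_wf_flat_step \<open>gauss_wf w'\<close> by blast
    from index_sum_flat_step[where g = g, OF s this assms(3)] show ?thesis by simp
  qed
  with step.IH show ?case by simp
qed simp

definition signed_weight :: "(nat \<Rightarrow> int) \<Rightarrow> nat \<times> bool \<Rightarrow> int" where
  "signed_weight s e = s (fst e) * endpoint_weight e"

lemma gpos_nth: "distinct w \<Longrightarrow> i < length w \<Longrightarrow> gpos w (w ! i) = i"
  unfolding gpos_def by (rule the_equality) (auto simp: nth_eq_iff_index_eq)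

lemma gauss_wf_set_eq:
  assumes "gauss_wf w"
  shows "set w = (\<lambda>c. (c, True)) ` gchords w \<union> (\<lambda>c. (c, False)) ` gchords w"
proof (intro equalityI subsetI)
  fix x assume "x \<in> (\<lambda>c. (c, True)) ` gchords w \<union> (\<lambda>c. (c, False)) ` gchords w"
  then obtain c \<beta> where x: "x = (c, \<beta>)" and "(c, \<beta>) \<in> set w \<or> (c, \<not> \<beta>) \<in> set w"
    by (auto simp: gchords_def) (metis (full_types))+
  then show "x \<in> set w"
    using assms unfolding gauss_wf_def by force
qed (force simp: gchords_def)

lemma gind_eq_sum_on_right:
  assumes "gauss_wf w" "c \<in> gchords w"
  shows "gind w s c = (\<Sum>k<length w. if on_right w c k then signed_weight s (w ! k) else 0)"
proof -
  let ?C = "gchords w" and ?R = "on_right w c"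
  let ?G = "\<lambda>x. if ?R (gpos w x) then signed_weight s x else 0"
  have dist: "distinct w" using assms(1) by (simp add: gauss_wf_def)
  have "\<not> ?R (tailpos w c)" "\<not> ?R (headpos w c)"
    by (simp_all add: on_right_def in_arc_def)
  then have "gind w s c =
      (\<Sum>d\<in>?C. (if ?R (headpos w d) then s d else 0) - (if ?R (tailpos w d) then s d else 0))"
    unfolding gind_def
    by (simp add: sum.inter_filter sum_subtractf[symmetric], intro sum.cong)
       (auto simp: crosses_LR_def crosses_RL_def)
  also have "\<dots> = (\<Sum>d\<in>?C. ?G (d, False) + ?G (d, True))"
    by (rule sum.cong) (auto simp: signed_weight_def endpoint_weight_def headpos_def tailpos_def)
  also have "\<dots> = (\<Sum>d\<in>?C. ?G (d, False)) + (\<Sum>d\<in>?C. ?G (d, True))"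
    by (rule sum.distrib)
  also have "\<dots> = (\<Sum>x\<in>set w. ?G x)"
    unfolding gauss_wf_set_eq[OF assms(1)]
    by (subst sum.union_disjoint) (auto simp: sum.reindex inj_on_def)
  also have "\<dots> = (\<Sum>k<length w. ?G (w ! k))"
    using dist by (simp add: sum_list_distinct_conv_sum_set[symmetric] sum_list_sum_nth atLeast0LessThan)
  also have "\<dots> = (\<Sum>k<length w. if ?R k then signed_weight s (w ! k) else 0)"
    by (rule sum.cong) (simp_all add: gpos_nth[OF dist])
  finally show ?thesis .
qed

lemma sum_in_arc_inner:
  assumes "l = a @ e # b @ e' # d"
  shows "(\<Sum>k<length l. if in_arc (length a) (Suc (length a + length b)) k then f (l ! k) else 0)
         = (sum_list (map f b) :: int)"
proof -
  let ?i = "length a" and ?j = "Suc (length a + length b)"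
  have "{k \<in> {..<length l}. in_arc ?i ?j k} = (\<lambda>k. Suc ?i + k) ` {..<length b}"
  proof (intro equalityI subsetI)
    fix k assume "k \<in> {k \<in> {..<length l}. in_arc ?i ?j k}"
    then have "?i < k" "k < ?j" by (auto simp: in_arc_def)
    then show "k \<in> (\<lambda>k. Suc ?i + k) ` {..<length b}"
      by (auto simp: image_iff intro!: bexI[of _ "k - Suc ?i"])
  qed (auto simp: in_arc_def assms)
  then have "(\<Sum>k<length l. if in_arc ?i ?j k then f (l ! k) else 0) =
             (\<Sum>k\<in>(\<lambda>k. Suc ?i + k) ` {..<length b}. f (l ! k))"
    by (simp add: sum.inter_filter[symmetric])
  also have "\<dots> = (\<Sum>k<length b. f (b ! k))"
    by (subst sum.reindex) (auto simp: inj_on_def assms nth_append)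
  finally show ?thesis by (simp add: sum_list_sum_nth atLeast0LessThan)
qed

lemma sum_in_arc_outer:
  assumes "l = a @ e # b @ e' # d"
  shows "(\<Sum>k<length l. if in_arc (Suc (length a + length b)) (length a) k then f (l ! k) else 0)
         = (sum_list (map f a) + sum_list (map f d) :: int)"
proof -
  let ?i = "length a" and ?j = "Suc (length a + length b)"
  have "{k \<in> {..<length l}. in_arc ?j ?i k} = {..<?i} \<union> (\<lambda>k. Suc ?j + k) ` {..<length d}"
  proof (intro equalityI subsetI)
    fix k assume "k \<in> {k \<in> {..<length l}. in_arc ?j ?i k}"
    then have "k < ?i \<or> ?j < k" "k < length l" by (auto simp: in_arc_def)
    then show "k \<in> {..<?i} \<union> (\<lambda>k. Suc ?j + k) ` {..<length d}"
      by (auto simp: image_iff assms intro!: bexI[of _ "k - Suc ?j"])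
  qed (auto simp: in_arc_def assms)
  then have "(\<Sum>k<length l. if in_arc ?j ?i k then f (l ! k) else 0) =
             (\<Sum>k\<in>{..<?i} \<union> (\<lambda>k. Suc ?j + k) ` {..<length d}. f (l ! k))"
    by (simp add: sum.inter_filter[symmetric])
  also have "\<dots> = (\<Sum>k<?i. f (l ! k)) + (\<Sum>k\<in>(\<lambda>k. Suc ?j + k) ` {..<length d}. f (l ! k))"
    by (rule sum.union_disjoint) auto
  also have "(\<Sum>k<?i. f (l ! k)) = (\<Sum>k<?i. f (a ! k))"
    by (rule sum.cong) (simp_all add: assms nth_append)
  also have "(\<Sum>k\<in>(\<lambda>k. Suc ?j + k) ` {..<length d}. f (l ! k)) = (\<Sum>k<length d. f (d ! k))"
    by (subst sum.reindex) (auto simp: inj_on_def assms nth_append)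
  finally show ?thesis by (simp add: sum_list_sum_nth atLeast0LessThan)
qed

text \<open>If the tail of c comes first, the right of c is the arc between its endpoints; otherwise
it is the complementary arc, whose signed weight is the negative one since the whole word has signed
weight 0.\<close>

lemma gind_chord_split:
  assumes "gauss_wf w" "w = a @ [(c, \<beta>)] @ b @ [(c, \<not> \<beta>)] @ d"
  shows "gind w s c = - endpoint_weight (c, \<beta>) * sum_list (map (signed_weight s) b)"
proof -
  let ?i = "length a" and ?j = "Suc (length a + length b)" and ?\<omega> = "signed_weight s"
  have dist: "distinct w" using assms(1) by (simp add: gauss_wf_def)
  have w: "w = a @ (c, \<beta>) # b @ (c, \<not> \<beta>) # d" using assms(2) by simp
  have pos: "gpos w (c, \<beta>) = ?i" "gpos w (c, \<not> \<beta>) = ?j"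
    using gpos_nth[OF dist, of ?i] gpos_nth[OF dist, of ?j] by (simp_all add: w nth_append)
  have "gind w s c = (\<Sum>k<length w. if in_arc (tailpos w c) (headpos w c) k then ?\<omega> (w ! k) else 0)"
    using gind_eq_sum_on_right[OF assms(1)] w by (simp add: on_right_def gchords_def)
  show ?thesis
  proof (cases \<beta>)
    case True
    then have "tailpos w c = ?i" "headpos w c = ?j"
      using pos by (simp_all add: tailpos_def headpos_def)
    then show ?thesis
      using \<open>gind w s c = _\<close> sum_in_arc_inner[OF w, of ?\<omega>] True by (simp add: endpoint_weight_def)
  next
    case False
    then have "tailpos w c = ?j" "headpos w c = ?i"
      using pos by (simp_all add: tailpos_def headpos_def)
    moreover have "sum_list (map ?\<omega> w) = 0"
      by (rule gauss_wf_sum_list_antisym[OF assms(1)]) (simp add: signed_weight_def endpoint_weight_def)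
    ultimately show ?thesis
      using \<open>gind w s c = _\<close> sum_in_arc_outer[OF w, of ?\<omega>] w False
      by (simp add: signed_weight_def endpoint_weight_def)
  qed
qed

lemma word_weight_flatten:
  assumes "\<forall>e\<in>set l. s (fst e) = 1 \<or> s (fst e) = -1"
  shows "word_weight (flatten l s) = sum_list (map (signed_weight s) l)"
  using assms
  by (induction l) (auto simp: flatten_def signed_weight_def endpoint_weight_def)

lemma flat_index_flatten_chord_split:
  assumes "w = a @ [(c, \<beta>)] @ b @ [(c, \<not> \<beta>)] @ d" "c \<notin> fst ` set a" "c \<notin> fst ` set b"
    "\<forall>e\<in>set w. s (fst e) = 1 \<or> s (fst e) = -1"
  shows "flat_index (flatten w s) c = s c * (- endpoint_weight (c, \<beta>) * sum_list (map (signed_weight s) b))"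
proof -
  let ?\<beta>' = "if s c = 1 then \<beta> else \<not> \<beta>"
  have "flatten w s = flatten a s @ [(c, ?\<beta>')] @ flatten b s @ [(c, \<not> ?\<beta>')] @ flatten d s"
    using assms(1) by (simp add: flatten_def)
  moreover have "c \<notin> fst ` set (flatten a s)" "c \<notin> fst ` set (flatten b s)"
    using assms(2,3) by (force simp: flatten_def)+
  ultimately have "flat_index (flatten w s) c = - endpoint_weight (c, ?\<beta>') * word_weight (flatten b s)"
    by (metis flat_index_split)
  moreover have "word_weight (flatten b s) = sum_list (map (signed_weight s) b)"
    using assms(1,4) by (intro word_weight_flatten) auto
  moreover have "s c = 1 \<or> s c = -1" using assms(1,4) by auto
  ultimately show ?thesis by (auto simp: endpoint_weight_def)
qed

lemma gind_eq_flat_index_flatten: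
  assumes "gauss_wf w" "c \<in> gchords w" "\<forall>d\<in>gchords w. s d = 1 \<or> s d = -1"
  shows "gind w s c = s c * flat_index (flatten w s) c"
proof -
  obtain a \<beta> b d where w: "w = a @ [(c, \<beta>)] @ b @ [(c, \<not> \<beta>)] @ d"
    and nc: "c \<notin> fst ` set a" "c \<notin> fst ` set b"
    using gauss_wf_chord_split[OF assms(1,2)] by metis
  have signs: "\<forall>e\<in>set w. s (fst e) = 1 \<or> s (fst e) = -1"
    using assms(3) by (simp add: gchords_def)
  have "s c * s c = 1" using assms(2,3) by auto
  then show ?thesis
    unfolding gind_chord_split[OF assms(1) w] flat_index_flatten_chord_split[OF w nc signs]
    by (simp add: mult.assoc[symmetric])
qed

definition odd_delta :: "int \<Rightarrow> int \<Rightarrow> int" where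
  "odd_delta n m = of_bool (m = n) - of_bool (m = - n)"

lemma odd_delta_uminus: "odd_delta n (- m) = - odd_delta n m"
  by (auto simp: odd_delta_def)

lemma gchords_flatten [simp]: "gchords (flatten w s) = gchords w"
  by (simp add: gchords_def flatten_def image_image split_def)

lemma gauss_wf_flatten:
  assumes "gauss_wf w"
  shows "gauss_wf (flatten w s)"
proof -
  let ?h = "\<lambda>(c::nat, \<beta>::bool). (c, if s c = 1 then \<beta> else \<not> \<beta>)"
  have "inj_on ?h (set w)" by (auto simp: inj_on_def split: if_splits)
  then have "distinct (map ?h w)" using assms by (simp add: gauss_wf_def distinct_map)
  moreover have "(c, \<not> \<beta>') \<in> set (map ?h w)" if mem: "(c, \<beta>') \<in> set (map ?h w)" for c \<beta>'
  proof -
    obtain \<beta> where \<beta>: "(c, \<beta>) \<in> set w" "\<beta>' = (if s c = 1 then \<beta> else \<not> \<beta>)"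
      using mem by auto
    then have "?h (c, \<not> \<beta>) \<in> set (map ?h w)"
      using assms unfolding gauss_wf_def set_map by (intro imageI) blast
    moreover have "?h (c, \<not> \<beta>) = (c, \<not> \<beta>')" using \<beta>(2) by simp
    ultimately show ?thesis by (simp only:)
  qed
  ultimately show ?thesis
    unfolding gauss_wf_def flatten_def by blast
qed

lemma writhe_coeff_diff_eq_index_sum:
  assumes "gauss_wf w" "\<forall>c\<in>gchords w. s c = 1 \<or> s c = -1" "n \<noteq> 0"
  shows "writhe_coeff w s n - writhe_coeff w s (- n) = index_sum (odd_delta n) (flatten w s)"
proof -
  have "writhe_coeff w s n - writhe_coeff w s (- n) =
        (\<Sum>c\<in>gchords w. (if gind w s c = n then s c else 0) - (if gind w s c = - n then s c else 0))"
    using assms(3) by (simp add: writhe_coeff_def sum.inter_filter sum_subtractf)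
  also have "\<dots> = (\<Sum>c\<in>gchords w. odd_delta n (flat_index (flatten w s) c))"
  proof (rule sum.cong)
    fix c assume c: "c \<in> gchords w"
    with assms(2) have "s c = 1 \<or> s c = -1" by blast
    with gind_eq_flat_index_flatten[OF assms(1) c assms(2)]
    show "(if gind w s c = n then s c else 0) - (if gind w s c = - n then s c else 0) =
          odd_delta n (flat_index (flatten w s) c)"
      by (auto simp: odd_delta_def)
  qed simp
  finally show ?thesis by (simp add: index_sum_def)
qed

theorem corollary3p5:
  fixes w :: gword and s :: "nat \<Rightarrow> int"
  assumes "gauss_wf w"
    and "\<forall>c\<in>gchords w. s c = 1 \<or> s c = -1"
    and "\<exists>n. writhe_coeff w s n \<noteq> writhe_coeff w s (- n)"
  shows "\<not> flat_equiv (flatten w s) []"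
proof
  assume trivial: "flat_equiv (flatten w s) []"
  obtain n where n: "writhe_coeff w s n \<noteq> writhe_coeff w s (- n)"
    using assms(3) by blast
  then have "n \<noteq> 0" by auto
  have "index_sum (odd_delta n) (flatten w s) = index_sum (odd_delta n) []"
    using flat_equiv_index_sum[OF trivial gauss_wf_flatten[OF assms(1)]] odd_delta_uminus
    by metis
  also have "\<dots> = 0" by (simp add: index_sum_def gchords_def)
  finally show False
    using n writhe_coeff_diff_eq_index_sum[OF assms(1,2) \<open>n \<noteq> 0\<close>] by simp
qed

end
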